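(* Suppose $x\in\mathrm{Fix}_n(\sigma)^\circ$ for some integer $n\ge1$, and that $n$ is minimal with this property. If $f\in C(X)$, $m\in\mathbb{Z}$, $\mathrm{supp}(f)\subset\mathrm{Fix}_m(\sigma)$ and $n\nmid m$, then $f(x)=0$.
   Context: $X$ is a non-empty compact Hausdorff space, $\sigma:X\to X$ a homeomorphism, $C(X)$ the continuous complex functions on $X$. For $m\in\mathbb{Z}$, $\mathrm{Fix}_m(\sigma)=\{x\in X:\sigma^mx=x\}$; superscript $\circ$ denotes interior in $X$; $\mathrm{supp}(f)$ is the closure of $\{x:f(x)\ne0\}$. *)

theory Defs
  imports "HOL-Analysis.Analysis"
begin

definition zpow :: "'a set \<Rightarrow> ('a \<Rightarrow> 'a) \<Rightarrow> int \<Rightarrow> 'a \<Rightarrow> 'a" where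
  "zpow X \<sigma> m = (if 0 \<le> m then \<sigma> ^^ nat m else inv_into X \<sigma> ^^ nat (- m))"

definition Fix :: "'a set \<Rightarrow> ('a \<Rightarrow> 'a) \<Rightarrow> int \<Rightarrow> 'a set" where
  "Fix X \<sigma> m = {x \<in> X. zpow X \<sigma> m x = x}"

definition supp :: "'a::topological_space set \<Rightarrow> ('a \<Rightarrow> complex) \<Rightarrow> 'a set" where
  "supp X f = (top_of_set X) closure_of {x \<in> X. f x \<noteq> 0}"

end

theory Submission
  imports Defs
begin

text \<open>On a neighbourhood of x where f does not vanish, every point is fixed both by
  \<sigma>^n and by \<sigma>^m, hence by \<sigma>^gcd(n,m). So x lies in the interior of Fix_gcd(n,m),
  and gcd(n,m) < n because n does not divide m, contradicting the minimality of n.\<close>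

lemma funpow_fixed_mult: "(f ^^ n) y = y \<Longrightarrow> (f ^^ (n * k)) y = y"
proof (induction k)
  case 0
  then show ?case by simp
next
  case (Suc k)
  have "(f ^^ (n * Suc k)) y = (f ^^ n) ((f ^^ (n * k)) y)"
    by (simp add: funpow_add mult.commute)
  with Suc show ?case by simp
qed

lemma funpow_fixed_gcd:
  assumes "n \<noteq> 0" "(f ^^ n) y = y" "(f ^^ a) y = y"
  shows "(f ^^ gcd n a) y = y"
proof -
  obtain u v where uv: "n * u = a * v + gcd n a"
    using bezout_nat[OF assms(1)] by blast
  have "y = (f ^^ (n * u)) y"
    using funpow_fixed_mult[OF assms(2)] by simp
  also have "\<dots> = (f ^^ gcd n a) ((f ^^ (a * v)) y)"
    by (simp add: uv add.commute funpow_add)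
  also have "\<dots> = (f ^^ gcd n a) y"
    using funpow_fixed_mult[OF assms(3)] by simp
  finally show ?thesis by simp
qed

lemma funpow_inv_into_cancel:
  assumes surj: "\<sigma> ` X = X" and "y \<in> X"
  shows "(inv_into X \<sigma> ^^ k) y \<in> X \<and> (\<sigma> ^^ k) ((inv_into X \<sigma> ^^ k) y) = y"
  using \<open>y \<in> X\<close>
proof (induction k arbitrary: y)
  case 0
  then show ?case by simp
next
  case (Suc k)
  have "inv_into X \<sigma> y \<in> X" "\<sigma> (inv_into X \<sigma> y) = y"
    using Suc.prems surj by (metis inv_into_into, simp add: f_inv_into_f)
  moreover have "(inv_into X \<sigma> ^^ Suc k) y = (inv_into X \<sigma> ^^ k) (inv_into X \<sigma> y)"
    by (simp add: funpow_Suc_right del: funpow.simps)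
  ultimately show ?case
    using Suc.IH by simp
qed

lemma Fix_imp_funpow_abs_fixed:
  assumes "\<sigma> ` X = X" and "y \<in> Fix X \<sigma> m"
  shows "(\<sigma> ^^ nat \<bar>m\<bar>) y = y"
proof (cases "0 \<le> m")
  case True
  then show ?thesis using assms(2) by (simp add: Fix_def zpow_def)
next
  case False
  then have "(inv_into X \<sigma> ^^ nat (- m)) y = y" "y \<in> X"
    using assms(2) by (auto simp: Fix_def zpow_def)
  with funpow_inv_into_cancel[OF assms(1) \<open>y \<in> X\<close>, of "nat (- m)"] False
  show ?thesis by simp
qed

lemma Fix_Int_subset_Fix_gcd:
  assumes "\<sigma> ` X = X" and "n \<noteq> 0"
  shows "Fix X \<sigma> (int n) \<inter> Fix X \<sigma> m \<subseteq> Fix X \<sigma> (int (gcd n (nat \<bar>m\<bar>)))"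
proof
  fix y assume y: "y \<in> Fix X \<sigma> (int n) \<inter> Fix X \<sigma> m"
  have "(\<sigma> ^^ n) y = y"
    using y by (simp add: Fix_def zpow_def)
  moreover have "(\<sigma> ^^ nat \<bar>m\<bar>) y = y"
    using y Fix_imp_funpow_abs_fixed[OF assms(1)] by blast
  ultimately have "(\<sigma> ^^ gcd n (nat \<bar>m\<bar>)) y = y"
    by (rule funpow_fixed_gcd[OF assms(2)])
  with y show "y \<in> Fix X \<sigma> (int (gcd n (nat \<bar>m\<bar>)))"
    by (simp add: Fix_def zpow_def)
qed

lemma nonzero_subset_supp: "{x \<in> X. f x \<noteq> 0} \<subseteq> supp X f"
  unfolding supp_def by (rule closure_of_subset) auto

lemma gcd_nat_abs_less:
  assumes "n \<noteq> 0" and "\<not> int n dvd m"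
  shows "gcd n (nat \<bar>m\<bar>) < n"
proof -
  have "gcd n (nat \<bar>m\<bar>) \<noteq> n"
    using assms(2) by (metis gcd_dvd2 dvd_abs_iff int_dvd_int_iff int_nat_eq abs_ge_zero)
  moreover have "gcd n (nat \<bar>m\<bar>) \<le> n"
    using assms(1) by (rule gcd_le1_nat)
  ultimately show ?thesis by simp
qed

theorem lemma2p1:
  fixes X :: "'a::t2_space set" and \<sigma> \<tau> :: "'a \<Rightarrow> 'a"
    and f :: "'a \<Rightarrow> complex" and x :: 'a and n :: nat and m :: int
  assumes "compact X" and "X \<noteq> {}"
    and "homeomorphism X X \<sigma> \<tau>"
    and "n \<ge> 1"
    and "x \<in> (top_of_set X) interior_of Fix X \<sigma> (int n)"
    and "\<And>k::nat. 1 \<le> k \<Longrightarrow> k < n \<Longrightarrow> x \<notin> (top_of_set X) interior_of Fix X \<sigma> (int k)"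
    and "continuous_on X f"
    and "supp X f \<subseteq> Fix X \<sigma> m"
    and "\<not> (int n dvd m)"
  shows "f x = 0"
proof (rule ccontr)
  assume "f x \<noteq> 0"
  define g where "g = gcd n (nat \<bar>m\<bar>)"
  define W where "W = (top_of_set X) interior_of Fix X \<sigma> (int n) \<inter> {y \<in> X. f y \<noteq> 0}"
  have "x \<in> W"
    using assms(5) \<open>f x \<noteq> 0\<close> interior_of_subset_topspace[of "top_of_set X"]
    unfolding W_def by auto
  have "openin (top_of_set X) {y \<in> X. f y \<noteq> 0}"
    using continuous_openin_preimage_gen[OF assms(7), of "- {0}"] by (simp add: vimage_def Int_def open_Compl)
  then have "openin (top_of_set X) W"
    unfolding W_def by (rule openin_Int[OF openin_interior_of])
  have "W \<subseteq> Fix X \<sigma> (int n) \<inter> Fix X \<sigma> m"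
    using interior_of_subset[of "top_of_set X" "Fix X \<sigma> (int n)"] nonzero_subset_supp[of X f]
      assms(8)
    unfolding W_def by blast
  also have "\<dots> \<subseteq> Fix X \<sigma> (int g)"
    using Fix_Int_subset_Fix_gcd[of \<sigma> X n m] assms(3,4)
    unfolding g_def by (simp add: homeomorphism_def)
  finally have "W \<subseteq> Fix X \<sigma> (int g)" .
  with \<open>openin (top_of_set X) W\<close> \<open>x \<in> W\<close>
  have "x \<in> (top_of_set X) interior_of Fix X \<sigma> (int g)"
    using interior_of_maximal by blast
  moreover have "1 \<le> g" "g < n"
    using assms(4,9) gcd_nat_abs_less by (auto simp: g_def Suc_le_eq)
  ultimately show False using assms(6) by blast
qed

end
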